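(* Consider online caching with catalogue size $N$, cache capacity $C<N/2$, batch size $B$ and horizon $T$. Suppose that at each slot $t$ each of the $B$ requests of the batch is independently sampled with probability $f\in(0,1]$ (independently across slots and of the algorithm's perturbations), let $\hat d_t\in\mathbb{N}^N$ count, for each file, the number of sampled requests for that file, and use the estimator $\hat r_t=\frac{1}{f}\hat d_t$ (which satisfies $\mathbb{E}[\hat r_t]=r_t$). Then NFPL with $\eta=\frac{B}{f}\sqrt{T/(2C)}$ satisfies $$\bar{\mathcal{R}}_T(\mathrm{NFPL})\le 2\sqrt{2}\,\frac{B}{f}\sqrt{C\,T}.$$
   Context: Online caching setting: files are indexed by $\{1,\dots,N\}$. At each time slot $t=1,\dots,T$ a batch of $B$ requests arrives, summarized by $r_t\in\mathbb{N}^N$ with $r_{t,i}$ the number of requests for file $i$ and $\sum_i r_{t,i}=B$; the sequence $r_1,\dots,r_T$ is fixed in advance (oblivious). The decision set is the capped simplex $\mathcal{X}=\{x\in[0,1]^N:\sum_{i=1}^N x_i=C\}$ and the cost of decision $x$ at slot $t$ is $\langle r_t,x\rangle$. For $s\in\mathbb{R}^N$, $M(s)\in\arg\min_{x\in\mathcal{X}}\langle s,x\rangle$. The NFPL algorithm with parameter $\eta$: at each slot $t$ draw $\gamma_t$ uniformly from $[0,\eta]^N$ (independently), play $x_t=M\big(\sum_{s<t}\hat r_s+\gamma_t\big)$, then observe $\hat r_t$. The (weak/pseudo) regret is $\bar{\mathcal{R}}_T=\mathbb{E}\big[\sum_{t=1}^T\langle r_t,x_t\rangle\big]-\min_{x\in\mathcal{X}}\sum_{t=1}^T\langle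 r_t,x\rangle$, expectation over all the algorithm's randomness, including the sampling. *)

theory Defs
  imports "HOL-Probability.Probability"
begin

text \<open>Files are indexed by 0..N-1 and time slots by 0..T-1.
  A request sequence is r :: nat => nat => nat, with r t i the number of
  requests for file i in slot t.\<close>

definition capped_simplex :: "nat \<Rightarrow> nat \<Rightarrow> (nat \<Rightarrow> real) set" where
  "capped_simplex N C = {x. (\<forall>i<N. 0 \<le> x i \<and> x i \<le> 1) \<and> (\<Sum>i<N. x i) = real C}"

definition is_min_oracle :: "nat \<Rightarrow> nat \<Rightarrow> ((nat \<Rightarrow> real) \<Rightarrow> (nat \<Rightarrow> real)) \<Rightarrow> bool" where
  "is_min_oracle N C M \<longleftrightarrow> (\<forall>s. M s \<in> capped_simplex N C \<and>
      (\<forall>y\<in>capped_simplex N C. (\<Sum>i<N. s i * M s i) \<le> (\<Sum>i<N. s i * y i)))"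

text \<open>Individual requests: request number j < r t i for file i at slot t is
  identified with the triple (t,i,j); each is sampled by an independent Bernoulli(f) coin.\<close>
definition sample_idx :: "nat \<Rightarrow> nat \<Rightarrow> (nat \<Rightarrow> nat \<Rightarrow> nat) \<Rightarrow> (nat \<times> nat \<times> nat) set" where
  "sample_idx T N r = {(t, i, j). t < T \<and> i < N \<and> j < r t i}"

definition sample_space :: "nat \<Rightarrow> nat \<Rightarrow> (nat \<Rightarrow> nat \<Rightarrow> nat) \<Rightarrow> real \<Rightarrow> (nat \<times> nat \<times> nat \<Rightarrow> bool) measure" where
  "sample_space T N r f = PiM (sample_idx T N r) (\<lambda>_. measure_pmf (bernoulli_pmf f))"

definition pert_space :: "nat \<Rightarrow> nat \<Rightarrow> real \<Rightarrow> (nat \<times> nat \<Rightarrow> real) measure" where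
  "pert_space T N \<eta> = PiM ({..<T} \<times> {..<N}) (\<lambda>_. uniform_measure lborel {0..\<eta>})"

definition nfpl_space :: "nat \<Rightarrow> nat \<Rightarrow> (nat \<Rightarrow> nat \<Rightarrow> nat) \<Rightarrow> real \<Rightarrow> real
    \<Rightarrow> ((nat \<times> nat \<times> nat \<Rightarrow> bool) \<times> (nat \<times> nat \<Rightarrow> real)) measure" where
  "nfpl_space T N r f \<eta> = sample_space T N r f \<Otimes>\<^sub>M pert_space T N \<eta>"

definition dhat :: "(nat \<Rightarrow> nat \<Rightarrow> nat) \<Rightarrow> (nat \<times> nat \<times> nat \<Rightarrow> bool) \<Rightarrow> nat \<Rightarrow> nat \<Rightarrow> nat" where
  "dhat r \<sigma> t i = card {j. j < r t i \<and> \<sigma> (t, i, j)}"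

definition rhat :: "(nat \<Rightarrow> nat \<Rightarrow> nat) \<Rightarrow> real \<Rightarrow> (nat \<times> nat \<times> nat \<Rightarrow> bool) \<Rightarrow> nat \<Rightarrow> nat \<Rightarrow> real" where
  "rhat r f \<sigma> t i = real (dhat r \<sigma> t i) / f"

definition nfpl_decision :: "((nat \<Rightarrow> real) \<Rightarrow> (nat \<Rightarrow> real)) \<Rightarrow> (nat \<Rightarrow> nat \<Rightarrow> nat) \<Rightarrow> real
    \<Rightarrow> (nat \<times> nat \<times> nat \<Rightarrow> bool) \<Rightarrow> (nat \<times> nat \<Rightarrow> real) \<Rightarrow> nat \<Rightarrow> nat \<Rightarrow> real" where
  "nfpl_decision M r f \<sigma> \<gamma> t = M (\<lambda>i. (\<Sum>s<t. rhat r f \<sigma> s i) + \<gamma> (t, i))"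

definition nfpl_cost :: "nat \<Rightarrow> nat \<Rightarrow> ((nat \<Rightarrow> real) \<Rightarrow> (nat \<Rightarrow> real)) \<Rightarrow> (nat \<Rightarrow> nat \<Rightarrow> nat) \<Rightarrow> real
    \<Rightarrow> (nat \<times> nat \<times> nat \<Rightarrow> bool) \<times> (nat \<times> nat \<Rightarrow> real) \<Rightarrow> real" where
  "nfpl_cost T N M r f \<omega> =
     (\<Sum>t<T. \<Sum>i<N. real (r t i) * nfpl_decision M r f (fst \<omega>) (snd \<omega>) t i)"

definition nfpl_pseudo_regret :: "nat \<Rightarrow> nat \<Rightarrow> nat \<Rightarrow> (nat \<Rightarrow> nat \<Rightarrow> nat) \<Rightarrow> real \<Rightarrow> real
    \<Rightarrow> ((nat \<Rightarrow> real) \<Rightarrow> (nat \<Rightarrow> real)) \<Rightarrow> real" where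
  "nfpl_pseudo_regret N C T r f \<eta> M =
     (\<integral>\<omega>. nfpl_cost T N M r f \<omega> \<partial>nfpl_space T N r f \<eta>)
     - (INF x\<in>capped_simplex N C. \<Sum>t<T. \<Sum>i<N. real (r t i) * x i)"

end

theory Submission
  imports Defs
begin

text \<open>NFPL is follow-the-perturbed-leader run on the estimates \<open>rhat\<close>. For fixed perturbations,
  the incurred cost \<open>\<langle>r\<^sub>t, x\<^sub>t\<rangle>\<close> and the estimated cost \<open>\<langle>rhat\<^sub>t, x\<^sub>t\<rangle>\<close> have the same
  expectation over the sampling, because \<open>x\<^sub>t\<close> only depends on the samples of earlier slots and
  \<open>rhat\<^sub>t\<close> is unbiased. For a fixed realisation of the estimates, the be-the-leader lemma bounds
  the cost of the leader that already knows \<open>rhat\<^sub>t\<close> by the best static cost plus \<open>\<eta> C\<close>, the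
  perturbations lying in \<open>[0,\<eta>]\<close>. Since the perturbation is uniform on \<open>[0,\<eta>]\<^sup>N\<close>, adding the
  vector \<open>rhat\<^sub>t\<close> (of 1-norm at most \<open>B/f\<close>) to its argument changes the expectation of a
  \<open>[0,B/f]\<close>-valued function by at most \<open>(B/f)\<^sup>2/\<eta>\<close>. The regret is thus at most
  \<open>\<eta> C + T (B/f)\<^sup>2/\<eta>\<close>, which for the chosen \<open>\<eta>\<close> equals \<open>(3/\<surd>2) (B/f) \<surd>(C T)\<close>.\<close>

section \<open>Uniform perturbations\<close>

abbreviation uniform_cube :: "nat \<Rightarrow> real \<Rightarrow> (nat \<Rightarrow> real) measure" where
  "uniform_cube N \<eta> \<equiv> PiM {..<N} (\<lambda>_. uniform_measure lborel {0..\<eta>})"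

lemma prob_space_uniform_Icc: "0 < \<eta> \<Longrightarrow> prob_space (uniform_measure lborel {0..\<eta>::real})"
  by (intro prob_space_uniform_measure) (auto simp: emeasure_lborel_Icc_eq)

lemma prob_space_uniform_cube: "0 < \<eta> \<Longrightarrow> prob_space (uniform_cube N \<eta>)"
  by (intro prob_space_PiM prob_space_uniform_Icc)

lemma (in prob_space) integral_le_nonneg_const:
  assumes "\<And>x. x \<in> space M \<Longrightarrow> h x \<le> c" and "0 \<le> c"
  shows "integral\<^sup>L M h \<le> (c::real)"
proof (cases "integrable M h")
  case True
  then show ?thesis using assms by (intro integral_le_const) (auto intro: AE_I2)
qed (use assms in \<open>simp add: not_integrable_integral_eq\<close>)

lemma integral_uniform_Icc:
  fixes \<phi> :: "real \<Rightarrow> real"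
  assumes "0 < \<eta>" and [measurable]: "\<phi> \<in> borel_measurable borel"
  shows "(\<integral>y. \<phi> y \<partial>uniform_measure lborel {0..\<eta>}) = (\<integral>y. indicator {0..\<eta>} y * \<phi> y \<partial>lborel) / \<eta>"
proof -
  have "uniform_measure lborel {0..\<eta>} = density lborel (\<lambda>x. ennreal (indicator {0..\<eta>} x / \<eta>))"
    unfolding uniform_measure_def
  proof (rule density_cong)
    show "(\<lambda>x. indicator {0..\<eta>} x / emeasure lborel {0..\<eta>}) \<in> borel_measurable lborel"
      by (simp add: divide_ennreal_def)
    show "AE x in lborel. indicator {0..\<eta>} x / emeasure lborel {0..\<eta>} = ennreal (indicator {0..\<eta>} x / \<eta>)"
      using assms divide_ennreal[of 1 \<eta>] by (auto split: split_indicator)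
  qed simp
  then show ?thesis
    using assms by (simp add: integral_density)
qed

lemma integral_uniform_Icc_translate_le:
  fixes \<phi> :: "real \<Rightarrow> real"
  assumes eta: "0 < \<eta>" and [measurable]: "\<phi> \<in> borel_measurable borel"
    and bounds: "\<And>y. 0 \<le> \<phi> y \<and> \<phi> y \<le> L" and c: "0 \<le> c"
  shows "(\<integral>y. \<phi> y \<partial>uniform_measure lborel {0..\<eta>}) - (\<integral>y. \<phi> (y + c) \<partial>uniform_measure lborel {0..\<eta>})
    \<le> L * c / \<eta>"
proof -
  have \<phi>_bounds: "0 \<le> \<phi> y" "\<phi> y \<le> L" for y using bounds by auto
  then have L: "0 \<le> L" by (meson order_trans)
  have integrable_box: "integrable lborel (\<lambda>y. indicator {a..b} y * L)" for a b :: real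
    by (intro integrable_mult_left) (simp add: integrable_indicator_iff emeasure_lborel_Icc_eq)
  have integrable_\<phi>: "integrable lborel (\<lambda>y. indicator {a..b} y * \<phi> y)" for a b :: real
    by (rule Bochner_Integration.integrable_bound[OF integrable_box[of a b]])
       (use \<phi>_bounds L in \<open>auto intro!: AE_I2 split: split_indicator\<close>)
  have translate: "(\<integral>y. indicator {0..\<eta>} y * \<phi> (y + c) \<partial>lborel) = (\<integral>y. indicator {c..c+\<eta>} y * \<phi> y \<partial>lborel)"
    using lborel_integral_real_affine[of 1 "\<lambda>y. indicator {c..c+\<eta>} y * \<phi> y" c]
    by (simp add: add.commute indicator_def)
  have "(\<integral>y. indicator {0..\<eta>} y * \<phi> y \<partial>lborel) - (\<integral>y. indicator {c..c+\<eta>} y * \<phi> y \<partial>lborel)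
      = (\<integral>y. indicator {0..\<eta>} y * \<phi> y - indicator {c..c+\<eta>} y * \<phi> y \<partial>lborel)"
    using integrable_\<phi> by simp
  also have "\<dots> \<le> (\<integral>y. indicator {0..c} y * L \<partial>lborel)"
  proof (rule integral_mono)
    fix y
    show "indicator {0..\<eta>} y * \<phi> y - indicator {c..c+\<eta>} y * \<phi> y \<le> indicator {0..c} y * L"
      using \<phi>_bounds[of y] L c by (auto simp: indicator_def)
  qed (intro Bochner_Integration.integrable_diff integrable_\<phi> integrable_box)+
  also have "\<dots> = L * c" using c by simp
  finally show ?thesis
    using eta integral_uniform_Icc[OF eta, of \<phi>] integral_uniform_Icc[OF eta, of "\<lambda>y. \<phi> (y + c)"]
    by (simp add: translate diff_divide_distrib[symmetric] divide_right_mono)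
qed

lemma measurable_PiM_UNIV_borelI:
  assumes "\<And>i. (\<lambda>x. h x i) \<in> borel_measurable X"
  shows "h \<in> X \<rightarrow>\<^sub>M PiM UNIV (\<lambda>_. borel)"
proof -
  have "(\<lambda>x i. h x i) \<in> X \<rightarrow>\<^sub>M PiM UNIV (\<lambda>_. borel)"
    by (rule measurable_PiM_single') (auto simp: assms)
  then show ?thesis by simp
qed

text \<open>No \<open>i \<in> I\<close> is required: otherwise \<open>v i = undefined\<close> on the whole space.\<close>
lemma borel_measurable_PiM_eval:
  fixes \<phi> :: "'b \<Rightarrow> real"
  assumes "\<And>j. j \<in> I \<Longrightarrow> \<phi> \<in> borel_measurable (Mi j)"
  shows "(\<lambda>v. \<phi> (v i)) \<in> borel_measurable (PiM I Mi)"
proof (cases "i \<in> I")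
  case True
  show ?thesis by (rule measurable_compose[OF measurable_component_singleton[OF True, of Mi] assms[OF True]])
next
  case False
  then have "\<And>v. v \<in> space (PiM I Mi) \<Longrightarrow> \<phi> (v i) = \<phi> undefined"
    by (auto simp: space_PiM PiE_def extensional_def)
  then show ?thesis by (subst measurable_cong[where g="\<lambda>_. \<phi> undefined"]) simp_all
qed

lemma borel_measurable_uniform_cube_translate:
  fixes g :: "(nat \<Rightarrow> real) \<Rightarrow> real"
  assumes "g \<in> borel_measurable (PiM UNIV (\<lambda>_. borel))"
  shows "(\<lambda>u. g (\<lambda>i. b i + u i)) \<in> borel_measurable (PiM J (\<lambda>_. uniform_measure lborel {0..\<eta>}))"
  using borel_measurable_PiM_eval[where \<phi>="\<lambda>y. y" and Mi="\<lambda>_. uniform_measure lborel {0..\<eta>}"]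
  by (intro measurable_compose[OF measurable_PiM_UNIV_borelI assms] borel_measurable_add) simp_all

lemma AE_uniform_cube:
  assumes "0 < \<eta>"
  shows "AE u in uniform_cube N \<eta>. \<forall>i\<in>{..<N}. 0 \<le> u i \<and> u i \<le> \<eta>"
proof (rule AE_finite_allI)
  fix i assume "i \<in> {..<N}"
  moreover have "AE y in uniform_measure lborel {0..\<eta>}. 0 \<le> y \<and> y \<le> \<eta>"
    by (rule AE_uniform_measureI) auto
  ultimately show "AE u in uniform_cube N \<eta>. 0 \<le> u i \<and> u i \<le> \<eta>"
    by (rule AE_PiM_component[OF prob_space_uniform_Icc[OF assms]])
qed simp

lemma uniform_cube_translate_coordinate_le:
  fixes g :: "(nat \<Rightarrow> real) \<Rightarrow> real" and b :: "nat \<Rightarrow> real"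
  assumes eta: "0 < \<eta>" and g: "g \<in> borel_measurable (PiM UNIV (\<lambda>_. borel))"
    and g_bounds: "\<And>s. 0 \<le> g s \<and> g s \<le> L" and k: "k < N" and c: "0 \<le> c"
  shows "(\<integral>u. g (\<lambda>i. b i + u i) \<partial>uniform_cube N \<eta>)
       - (\<integral>u. g (\<lambda>i. (b(k := b k + c)) i + u i) \<partial>uniform_cube N \<eta>) \<le> L * c / \<eta>"
proof -
  let ?U = "uniform_measure lborel {0..\<eta>}"
  interpret product_sigma_finite "\<lambda>_. ?U"
    using prob_space_uniform_Icc[OF eta]
    by (simp add: product_sigma_finite_def prob_space_imp_sigma_finite)
  interpret U: prob_space ?U using eta by (rule prob_space_uniform_Icc)
  interpret Q: prob_space "uniform_cube N \<eta>" using eta by (rule prob_space_uniform_cube)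
  define b' where "b' = b(k := b k + c)"
  define I where "I = {..<N} - {k}"
  have cube: "{..<N} = insert k I" "finite I" "k \<notin> I" using k by (auto simp: I_def)
  have integrable: "integrable (uniform_cube N \<eta>) (\<lambda>u. g (\<lambda>i. a i + u i))" for a
    by (rule Q.integrable_const_bound[where B=L])
       (use g_bounds borel_measurable_uniform_cube_translate[OF g] in auto)
  have "(\<integral>u. g (\<lambda>i. b i + u i) \<partial>uniform_cube N \<eta>) - (\<integral>u. g (\<lambda>i. b' i + u i) \<partial>uniform_cube N \<eta>)
      = (\<integral>u. g (\<lambda>i. b i + u i) - g (\<lambda>i. b' i + u i) \<partial>uniform_cube N \<eta>)"
    using integrable by simp
  also have "\<dots> = (\<integral>x. (\<integral>y. g (\<lambda>i. b i + (x(k:=y)) i) - g (\<lambda>i. b' i + (x(k:=y)) i) \<partial>?U) \<partial>PiM I (\<lambda>_. ?U))"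
    unfolding cube(1) by (rule product_integral_insert[OF cube(2,3)]) (use integrable cube(1) in simp)
  also have "\<dots> \<le> L * c / \<eta>"
  proof (rule prob_space.integral_le_nonneg_const)
    show "prob_space (PiM I (\<lambda>_. ?U))" using eta by (intro prob_space_PiM prob_space_uniform_Icc)
    show "0 \<le> L * c / \<eta>" using g_bounds[of undefined] c eta by auto
    fix x
    define \<phi> where "\<phi> = (\<lambda>y. g ((\<lambda>i. b i + x i)(k := b k + y)))"
    have \<phi>_meas: "\<phi> \<in> borel_measurable borel"
      unfolding \<phi>_def by (rule measurable_compose[OF measurable_PiM_UNIV_borelI g]) auto
    then have \<phi>_translate_meas: "(\<lambda>y. \<phi> (y + c)) \<in> borel_measurable borel" by measurable
    have "integrable ?U \<phi>" "integrable ?U (\<lambda>y. \<phi> (y + c))"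
      by (rule U.integrable_const_bound[where B=L]; use g_bounds \<phi>_meas \<phi>_translate_meas in \<open>auto simp: \<phi>_def\<close>)+
    moreover have "(\<lambda>i. b i + (x(k:=y)) i) = (\<lambda>i. b i + x i)(k := b k + y)"
      and "(\<lambda>i. b' i + (x(k:=y)) i) = (\<lambda>i. b i + x i)(k := b k + (y + c))" for y
      by (auto simp: b'_def)
    ultimately have "(\<integral>y. g (\<lambda>i. b i + (x(k:=y)) i) - g (\<lambda>i. b' i + (x(k:=y)) i) \<partial>?U)
        = (\<integral>y. \<phi> y \<partial>?U) - (\<integral>y. \<phi> (y + c) \<partial>?U)"
      by (simp add: \<phi>_def)
    also have "\<dots> \<le> L * c / \<eta>"
      by (rule integral_uniform_Icc_translate_le[OF eta \<phi>_meas _ c]) (simp add: \<phi>_def g_bounds)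
    finally show "(\<integral>y. g (\<lambda>i. b i + (x(k:=y)) i) - g (\<lambda>i. b' i + (x(k:=y)) i) \<partial>?U) \<le> L * c / \<eta>" .
  qed
  finally show ?thesis unfolding b'_def .
qed

lemma uniform_cube_translate_le:
  fixes g :: "(nat \<Rightarrow> real) \<Rightarrow> real" and b c :: "nat \<Rightarrow> real"
  assumes eta: "0 < \<eta>" and g: "g \<in> borel_measurable (PiM UNIV (\<lambda>_. borel))"
    and g_bounds: "\<And>s. 0 \<le> g s \<and> g s \<le> L" and c: "\<And>i. i < N \<Longrightarrow> 0 \<le> c i"
  shows "(\<integral>u. g (\<lambda>i. b i + u i) \<partial>uniform_cube N \<eta>)
    \<le> (\<integral>u. g (\<lambda>i. (b i + (if i < N then c i else 0)) + u i) \<partial>uniform_cube N \<eta>) + L * (\<Sum>i<N. c i) / \<eta>"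
proof -
  define b' where "b' n i = b i + (if i < n then c i else 0)" for n i
  have "(\<integral>u. g (\<lambda>i. b i + u i) \<partial>uniform_cube N \<eta>)
      \<le> (\<integral>u. g (\<lambda>i. b' n i + u i) \<partial>uniform_cube N \<eta>) + L * (\<Sum>i<n. c i) / \<eta>" if "n \<le> N" for n
    using that
  proof (induction n)
    case 0
    then show ?case by (simp add: b'_def)
  next
    case (Suc n)
    have "(b' n)(n := b' n n + c n) = b' (Suc n)"
      by (auto simp: b'_def)
    moreover have "(\<integral>u. g (\<lambda>i. b' n i + u i) \<partial>uniform_cube N \<eta>)
        - (\<integral>u. g (\<lambda>i. ((b' n)(n := b' n n + c n)) i + u i) \<partial>uniform_cube N \<eta>) \<le> L * c n / \<eta>"
      by (rule uniform_cube_translate_coordinate_le[OF eta g g_bounds]) (use Suc.prems c in auto)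
    ultimately show ?case
      using Suc by (simp add: add_divide_distrib distrib_left)
  qed
  from this[of N] show ?thesis by (simp add: b'_def)
qed

section \<open>Follow the perturbed leader\<close>

lemma min_oracleD:
  assumes "is_min_oracle N C M"
  shows "\<And>i. i < N \<Longrightarrow> 0 \<le> M s i" "\<And>i. i < N \<Longrightarrow> M s i \<le> 1"
    and "\<And>y. y \<in> capped_simplex N C \<Longrightarrow> (\<Sum>i<N. s i * M s i) \<le> (\<Sum>i<N. s i * y i)"
  using assms unfolding is_min_oracle_def capped_simplex_def by auto

lemma min_oracle_in_simplex: "is_min_oracle N C M \<Longrightarrow> M s \<in> capped_simplex N C"
  unfolding is_min_oracle_def by blast

lemma min_oracle_cost_cong:
  assumes argmin: "is_min_oracle N C M" and agree: "\<And>i. i < N \<Longrightarrow> s i = s' i"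
  shows "(\<Sum>i<N. s i * M s' i) = (\<Sum>i<N. s i * M s i)"
proof -
  note simplex = min_oracle_in_simplex[OF argmin]
  have "(\<Sum>i<N. s i * M s' i) = (\<Sum>i<N. s' i * M s' i)" using agree by simp
  also have "\<dots> \<le> (\<Sum>i<N. s' i * M s i)" by (rule min_oracleD(3)[OF argmin simplex])
  also have "\<dots> = (\<Sum>i<N. s i * M s i)" using agree by simp
  finally show ?thesis
    using min_oracleD(3)[OF argmin simplex, of s s'] by linarith
qed

lemma min_oracle_cost_bounds:
  assumes argmin: "is_min_oracle N C M" and e: "\<And>i. i < N \<Longrightarrow> 0 \<le> e i"
  shows "0 \<le> (\<Sum>i<N. e i * M s i) \<and> (\<Sum>i<N. e i * M s i) \<le> (\<Sum>i<N. e i)"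
  using e min_oracleD(1,2)[OF argmin]
  by (auto intro!: sum_nonneg sum_mono intro: mult_left_le)

lemma borel_measurable_min_oracle:
  fixes M :: "(nat \<Rightarrow> real) \<Rightarrow> nat \<Rightarrow> real"
  assumes "M \<in> PiM UNIV (\<lambda>_. borel) \<rightarrow>\<^sub>M PiM UNIV (\<lambda>_. borel)"
    and "\<And>i. (\<lambda>x. s x i) \<in> borel_measurable X"
  shows "(\<lambda>x. M (s x) i) \<in> borel_measurable X"
  using measurable_compose[OF measurable_compose[OF measurable_PiM_UNIV_borelI[OF assms(2)] assms(1)]
      measurable_component_singleton[of i UNIV]]
  by simp

text \<open>\<open>V m\<close> is the optimal perturbed cumulative cost after \<open>m\<close> rounds; since the leader of round
  \<open>t + 1\<close> is a feasible choice for round \<open>t\<close>, the costs of the leaders telescope.\<close>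
lemma be_the_leader:
  fixes d :: "nat \<Rightarrow> nat \<Rightarrow> real" and w :: "nat \<Rightarrow> nat \<Rightarrow> real" and u x :: "nat \<Rightarrow> real"
  assumes argmin: "is_min_oracle N C M" and x: "x \<in> capped_simplex N C"
    and u: "\<And>i. i < N \<Longrightarrow> 0 \<le> u i \<and> u i \<le> \<eta>"
    and leader: "\<And>t i. i < N \<Longrightarrow> w t i = (\<Sum>s<Suc t. d s i) + u i"
  shows "(\<Sum>t<n. \<Sum>i<N. d t i * M (w t) i) \<le> (\<Sum>i<N. (\<Sum>t<n. d t i) * x i) + \<eta> * real C"
proof -
  define D where "D m i = (\<Sum>s<m. d s i) + u i" for m i
  define V where "V m = (\<Sum>i<N. D m i * M (D m) i)" for m
  have telescope: "(\<Sum>t<m. \<Sum>i<N. d t i * M (w t) i) + V 0 \<le> V m" for m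
  proof (induction m)
    case (Suc m)
    have "V m \<le> (\<Sum>i<N. D m i * M (w m) i)"
      unfolding V_def by (rule min_oracleD(3)[OF argmin min_oracle_in_simplex[OF argmin]])
    also have "\<dots> + (\<Sum>i<N. d m i * M (w m) i) = (\<Sum>i<N. D (Suc m) i * M (w m) i)"
      by (simp add: D_def sum.distrib[symmetric] algebra_simps)
    also have "\<dots> = V (Suc m)"
      unfolding V_def by (rule min_oracle_cost_cong[OF argmin]) (simp add: leader D_def)
    finally show ?case using Suc.IH by simp
  qed simp
  have "V n \<le> (\<Sum>i<N. D n i * x i)"
    unfolding V_def by (rule min_oracleD(3)[OF argmin x])
  also have "\<dots> = (\<Sum>i<N. (\<Sum>t<n. d t i) * x i) + (\<Sum>i<N. u i * x i)"
    by (simp add: D_def sum.distrib[symmetric] algebra_simps)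
  also have "(\<Sum>i<N. u i * x i) \<le> (\<Sum>i<N. \<eta> * x i)"
    using u x by (intro sum_mono mult_right_mono) (auto simp: capped_simplex_def)
  also have "\<dots> = \<eta> * real C"
    using x by (simp add: capped_simplex_def sum_distrib_left[symmetric])
  finally have "V n \<le> (\<Sum>i<N. (\<Sum>t<n. d t i) * x i) + \<eta> * real C" by simp
  moreover have "0 \<le> V 0"
    unfolding V_def D_def using u min_oracleD(1)[OF argmin] by (auto intro!: sum_nonneg)
  ultimately show ?thesis using telescope[of n] by linarith
qed

lemma fpl_expected_cost_le:
  fixes d :: "nat \<Rightarrow> nat \<Rightarrow> real" and x :: "nat \<Rightarrow> real"
  assumes eta: "0 < \<eta>" and argmin: "is_min_oracle N C M" and x: "x \<in> capped_simplex N C"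
    and M: "M \<in> PiM UNIV (\<lambda>_. borel) \<rightarrow>\<^sub>M PiM UNIV (\<lambda>_. borel)"
    and d_nonneg: "\<And>t i. t < T \<Longrightarrow> i < N \<Longrightarrow> 0 \<le> d t i"
    and d_sum: "\<And>t. t < T \<Longrightarrow> (\<Sum>i<N. d t i) \<le> K"
  shows "(\<Sum>t<T. \<integral>u. (\<Sum>i<N. d t i * M (\<lambda>i. (\<Sum>s<t. d s i) + u i) i) \<partial>uniform_cube N \<eta>)
     \<le> (\<Sum>i<N. (\<Sum>t<T. d t i) * x i) + \<eta> * real C + real T * K\<^sup>2 / \<eta>"
proof -
  interpret Q: prob_space "uniform_cube N \<eta>" using eta by (rule prob_space_uniform_cube)
  define g where "g t s = (\<Sum>i<N. d t i * M s i)" for t s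
  \<comment> \<open>the leader's argument once \<open>d t\<close> is known; only the first \<open>N\<close> coordinates are
      shifted, since the cube perturbs only those\<close>
  define w where "w t u = (\<lambda>i. (\<Sum>s<t. d s i) + (if i < N then d t i else 0) + u i)" for t u
  have g_meas: "g t \<in> borel_measurable (PiM UNIV (\<lambda>_. borel))" for t
    unfolding g_def by (intro borel_measurable_sum borel_measurable_times borel_measurable_const
        borel_measurable_min_oracle[OF M]) simp
  have g_bounds: "t < T \<Longrightarrow> 0 \<le> g t s \<and> g t s \<le> (\<Sum>i<N. d t i)" for t s
    unfolding g_def by (rule min_oracle_cost_bounds[OF argmin]) (simp add: d_nonneg)
  have g_integrable: "t < T \<Longrightarrow> integrable (uniform_cube N \<eta>) (\<lambda>u. g t (\<lambda>i. a i + u i))" for t a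
    by (rule Q.integrable_const_bound[where B="\<Sum>i<N. d t i"])
       (use g_bounds borel_measurable_uniform_cube_translate[OF g_meas] in \<open>auto simp: abs_le_iff\<close>)
  have w_integrable: "t < T \<Longrightarrow> integrable (uniform_cube N \<eta>) (\<lambda>u. g t (w t u))" for t
    using g_integrable[of t "\<lambda>i. (\<Sum>s<t. d s i) + (if i < N then d t i else 0)"] by (simp add: w_def)
  have stability: "(\<integral>u. g t (\<lambda>i. (\<Sum>s<t. d s i) + u i) \<partial>uniform_cube N \<eta>)
      \<le> (\<integral>u. g t (w t u) \<partial>uniform_cube N \<eta>) + K\<^sup>2 / \<eta>" if t: "t < T" for t
  proof -
    have L: "0 \<le> (\<Sum>i<N. d t i)" using d_nonneg t by (auto intro: sum_nonneg)
    have "(\<integral>u. g t (\<lambda>i. (\<Sum>s<t. d s i) + u i) \<partial>uniform_cube N \<eta>)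
        \<le> (\<integral>u. g t (w t u) \<partial>uniform_cube N \<eta>) + (\<Sum>i<N. d t i) * (\<Sum>i<N. d t i) / \<eta>"
      unfolding w_def by (rule uniform_cube_translate_le[OF eta g_meas g_bounds[OF t]]) (simp add: d_nonneg t)
    also have "(\<Sum>i<N. d t i) * (\<Sum>i<N. d t i) / \<eta> \<le> K\<^sup>2 / \<eta>"
      using L d_sum[OF t] eta by (auto simp: power2_eq_square intro!: divide_right_mono mult_mono)
    finally show ?thesis by simp
  qed
  have "(\<Sum>t<T. \<integral>u. g t (\<lambda>i. (\<Sum>s<t. d s i) + u i) \<partial>uniform_cube N \<eta>)
      \<le> (\<Sum>t<T. (\<integral>u. g t (w t u) \<partial>uniform_cube N \<eta>) + K\<^sup>2 / \<eta>)"
    by (intro sum_mono stability) simp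
  also have "\<dots> = (\<Sum>t<T. \<integral>u. g t (w t u) \<partial>uniform_cube N \<eta>) + real T * K\<^sup>2 / \<eta>"
    by (simp add: sum.distrib)
  also have "(\<Sum>t<T. \<integral>u. g t (w t u) \<partial>uniform_cube N \<eta>) = (\<integral>u. (\<Sum>t<T. g t (w t u)) \<partial>uniform_cube N \<eta>)"
    by (rule Bochner_Integration.integral_sum[symmetric]) (simp add: w_integrable)
  also have "(\<integral>u. (\<Sum>t<T. g t (w t u)) \<partial>uniform_cube N \<eta>) \<le> (\<Sum>i<N. (\<Sum>t<T. d t i) * x i) + \<eta> * real C"
  proof (rule Q.integral_le_const)
    show "integrable (uniform_cube N \<eta>) (\<lambda>u. \<Sum>t<T. g t (w t u))"
      by (intro Bochner_Integration.integrable_sum w_integrable) simp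
    show "AE u in uniform_cube N \<eta>. (\<Sum>t<T. g t (w t u)) \<le> (\<Sum>i<N. (\<Sum>t<T. d t i) * x i) + \<eta> * real C"
      using AE_uniform_cube[OF eta, of N]
      by eventually_elim (unfold g_def, rule be_the_leader[OF argmin x], auto simp: w_def)
  qed
  finally show ?thesis by (simp add: g_def)
qed

lemma integral_pert_space_slot:
  fixes h :: "(nat \<Rightarrow> real) \<Rightarrow> real"
  assumes eta: "0 < \<eta>" and t: "t < T" and h: "h \<in> borel_measurable (uniform_cube N \<eta>)"
  shows "(\<integral>\<gamma>. h (\<lambda>i. \<gamma> (t, i)) \<partial>pert_space T N \<eta>) = (\<integral>u. h u \<partial>uniform_cube N \<eta>)"
proof -
  let ?K = "{..<T} \<times> {..<N}" and ?U = "\<lambda>_. uniform_measure lborel {0..\<eta>}"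
  have slot: "distr (PiM ?K ?U) (uniform_cube N \<eta>) (\<lambda>\<gamma>. \<lambda>i\<in>{..<N}. \<gamma> (t, i)) = uniform_cube N \<eta>"
    using distr_PiM_reindex[of ?K ?U "\<lambda>i. (t, i)" "{..<N}"] prob_space_uniform_Icc[OF eta] t
    by (auto simp: inj_on_def)
  have restrict: "(\<lambda>\<gamma>. \<lambda>i\<in>{..<N}. \<gamma> (t, i)) \<in> PiM ?K ?U \<rightarrow>\<^sub>M uniform_cube N \<eta>"
    by (rule measurable_restrict) (use t in auto)
  have "(\<integral>u. h u \<partial>uniform_cube N \<eta>) = (\<integral>\<gamma>. h (\<lambda>i\<in>{..<N}. \<gamma> (t, i)) \<partial>PiM ?K ?U)"
    by (subst slot[symmetric]) (rule integral_distr[OF restrict h])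
  also have "\<dots> = (\<integral>\<gamma>. h (\<lambda>i. \<gamma> (t, i)) \<partial>PiM ?K ?U)"
  proof (rule Bochner_Integration.integral_cong[OF refl])
    fix \<gamma> assume "\<gamma> \<in> space (PiM ?K ?U)"
    then have "(\<lambda>i\<in>{..<N}. \<gamma> (t, i)) = (\<lambda>i. \<gamma> (t, i))"
      by (auto simp: space_PiM PiE_def extensional_def restrict_def)
    then show "h (\<lambda>i\<in>{..<N}. \<gamma> (t, i)) = h (\<lambda>i. \<gamma> (t, i))" by simp
  qed
  finally show ?thesis by (simp add: pert_space_def)
qed

section \<open>Sampled requests\<close>

lemma prob_space_sample_space: "prob_space (sample_space T N r f)"
  unfolding sample_space_def by (intro prob_space_PiM) (simp add: prob_space_measure_pmf)

lemma finite_sample_idx: "finite (sample_idx T N r)"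
  by (rule finite_subset[of _ "SIGMA t:{..<T}. SIGMA i:{..<N}. {..<r t i}"])
     (auto simp: sample_idx_def)

lemma integral_PiM_coordinate_times_indep:
  fixes g :: "'b \<Rightarrow> real" and h :: "('a \<Rightarrow> 'b) \<Rightarrow> real"
  assumes I: "finite I" "k \<in> I" and prob: "\<And>i. prob_space (Mi i)"
    and g: "g \<in> borel_measurable (Mi k)" "\<And>y. \<bar>g y\<bar> \<le> G"
    and h: "h \<in> borel_measurable (PiM I Mi)" "\<And>\<sigma>. \<bar>h \<sigma>\<bar> \<le> H"
    and h_indep: "\<And>\<sigma> y. h (\<sigma>(k := y)) = h \<sigma>"
  shows "(\<integral>\<sigma>. g (\<sigma> k) * h \<sigma> \<partial>PiM I Mi) = (\<integral>y. g y \<partial>Mi k) * (\<integral>\<sigma>. h \<sigma> \<partial>PiM I Mi)"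
proof -
  interpret product_sigma_finite Mi
    by (simp add: product_sigma_finite_def prob_space_imp_sigma_finite prob)
  interpret Pi: prob_space "PiM I Mi" by (intro prob_space_PiM prob)
  interpret Mk: prob_space "Mi k" by (rule prob)
  define J where "J = I - {k}"
  have split: "I = insert k J" "finite J" "k \<notin> J" using I by (auto simp: J_def)
  have "\<bar>g (\<sigma> k) * h \<sigma>\<bar> \<le> G * H" for \<sigma>
    unfolding abs_mult by (rule mult_mono[OF g(2) h(2) order_trans[OF abs_ge_zero g(2)] abs_ge_zero])
  then have gh: "integrable (PiM I Mi) (\<lambda>\<sigma>. g (\<sigma> k) * h \<sigma>)"
    by (intro Pi.integrable_const_bound[where B="G * H"] AE_I2 borel_measurable_times h(1)
        measurable_compose[OF measurable_component_singleton[OF I(2), of Mi] g(1)]) simp_all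
  have h_int: "integrable (PiM I Mi) h"
    by (rule Pi.integrable_const_bound[where B=H]) (simp_all add: h)
  have "(\<integral>\<sigma>. g (\<sigma> k) * h \<sigma> \<partial>PiM I Mi) = (\<integral>x. (\<integral>y. g y * h x \<partial>Mi k) \<partial>PiM J Mi)"
    using product_integral_insert[OF split(2,3), of "\<lambda>\<sigma>. g (\<sigma> k) * h \<sigma>"] gh
    unfolding split(1) by (simp add: h_indep)
  also have "\<dots> = (\<integral>y. g y \<partial>Mi k) * (\<integral>x. (\<integral>y. h (x(k := y)) \<partial>Mi k) \<partial>PiM J Mi)"
    by (simp add: h_indep Mk.prob_space)
  also have "(\<integral>x. (\<integral>y. h (x(k := y)) \<partial>Mi k) \<partial>PiM J Mi) = (\<integral>\<sigma>. h \<sigma> \<partial>PiM I Mi)"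
    using product_integral_insert[OF split(2,3), of h] h_int unfolding split(1) by simp
  finally show ?thesis .
qed

lemma rhat_eq_sum: "rhat r f \<sigma> t i = (\<Sum>j<r t i. of_bool (\<sigma> (t, i, j))) / f"
proof -
  have "{..<r t i} \<inter> {j. \<sigma> (t, i, j)} = {j. j < r t i \<and> \<sigma> (t, i, j)}" by auto
  then show ?thesis by (simp add: rhat_def dhat_def)
qed

lemma borel_measurable_rhat: "(\<lambda>\<sigma>. rhat r f \<sigma> t i) \<in> borel_measurable (sample_space T N r f)"
  unfolding rhat_eq_sum sample_space_def
  by (intro borel_measurable_divide borel_measurable_sum borel_measurable_const borel_measurable_PiM_eval)
     simp

lemma rhat_nonneg: "0 < f \<Longrightarrow> 0 \<le> rhat r f \<sigma> t i"
  by (simp add: rhat_def)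

lemma rhat_le:
  assumes "0 < f"
  shows "rhat r f \<sigma> t i \<le> real (r t i) / f"
proof -
  have "dhat r \<sigma> t i \<le> r t i"
    unfolding dhat_def using card_mono[of "{..<r t i}" "{j. j < r t i \<and> \<sigma> (t, i, j)}"] by auto
  then show ?thesis using assms by (simp add: rhat_def divide_right_mono)
qed

lemma sum_rhat_le:
  assumes "0 < f" and "(\<Sum>i<N. r t i) = B"
  shows "(\<Sum>i<N. rhat r f \<sigma> t i) \<le> real B / f"
proof -
  have "(\<Sum>i<N. rhat r f \<sigma> t i) \<le> (\<Sum>i<N. real (r t i) / f)"
    by (intro sum_mono rhat_le assms(1))
  also have "\<dots> = real B / f"
    by (simp add: sum_divide_distrib[symmetric] flip: assms(2))
  finally show ?thesis .
qed

lemma rhat_fun_upd_later: "s < t \<Longrightarrow> rhat r f (\<sigma>((t, i, j) := b)) s i' = rhat r f \<sigma> s i'"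
  by (simp add: rhat_def dhat_def)

lemma integral_rhat_times_indep:
  fixes h :: "(nat \<times> nat \<times> nat \<Rightarrow> bool) \<Rightarrow> real"
  assumes f: "0 < f" "f \<le> 1" and t: "t < T" and i: "i < N"
    and h: "h \<in> borel_measurable (sample_space T N r f)" "\<And>\<sigma>. \<bar>h \<sigma>\<bar> \<le> H"
    and h_indep: "\<And>\<sigma> j b. h (\<sigma>((t, i, j) := b)) = h \<sigma>"
  shows "(\<integral>\<sigma>. rhat r f \<sigma> t i * h \<sigma> \<partial>sample_space T N r f)
    = real (r t i) * (\<integral>\<sigma>. h \<sigma> \<partial>sample_space T N r f)"
proof -
  interpret S: prob_space "sample_space T N r f" by (rule prob_space_sample_space)
  have H: "0 \<le> H" using order_trans[OF abs_ge_zero h(2)] .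
  have coin: "(\<integral>\<sigma>. of_bool (\<sigma> (t, i, j)) * h \<sigma> \<partial>sample_space T N r f)
      = f * (\<integral>\<sigma>. h \<sigma> \<partial>sample_space T N r f)" if "j < r t i" for j
  proof -
    have "(t, i, j) \<in> sample_idx T N r" using t i that by (simp add: sample_idx_def)
    with h H show ?thesis
      using integral_PiM_coordinate_times_indep[OF finite_sample_idx, where k="(t, i, j)"
          and Mi="\<lambda>_. measure_pmf (bernoulli_pmf f)" and g=of_bool and G=1 and h=h and H=H] f h_indep
      by (simp add: sample_space_def prob_space_measure_pmf)
  qed
  have integrable: "integrable (sample_space T N r f) (\<lambda>\<sigma>. of_bool (\<sigma> (t, i, j)) * h \<sigma>)" for j
    by (rule S.integrable_const_bound[where B=H])
       (use h H in \<open>auto intro!: borel_measurable_times borel_measurable_PiM_eval simp: sample_space_def\<close>)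
  have "rhat r f \<sigma> t i * h \<sigma> = (\<Sum>j<r t i. of_bool (\<sigma> (t, i, j)) * h \<sigma>) / f" for \<sigma>
    by (simp add: rhat_eq_sum sum_distrib_right del: sum_of_bool_eq sum_of_bool_mult_eq)
  then have "(\<integral>\<sigma>. rhat r f \<sigma> t i * h \<sigma> \<partial>sample_space T N r f)
      = (\<Sum>j<r t i. \<integral>\<sigma>. of_bool (\<sigma> (t, i, j)) * h \<sigma> \<partial>sample_space T N r f) / f"
    using integrable by (simp del: sum_of_bool_mult_eq)
  also have "\<dots> = real (r t i) * (\<integral>\<sigma>. h \<sigma> \<partial>sample_space T N r f)"
    using f by (simp add: coin)
  finally show ?thesis .
qed

section \<open>Regret of NFPL with sampled requests\<close>

lemma perturbation_tradeoff_le: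
  fixes K T C :: real
  assumes K: "0 < K" and T: "0 < T" and C: "0 < C"
  shows "K * sqrt (T / (2 * C)) * C + T * K\<^sup>2 / (K * sqrt (T / (2 * C)))
    \<le> 2 * sqrt 2 * K * sqrt (C * T)"
proof -
  define q where "q = sqrt (T / (2 * C))"
  have q: "0 < q" using T C by (simp add: q_def)
  have T_eq: "T = 2 * C * q\<^sup>2" using T C by (simp add: q_def)
  have "sqrt (C * T) = sqrt ((C * q)\<^sup>2 * 2)" by (simp add: T_eq power2_eq_square algebra_simps)
  also have "\<dots> = C * q * sqrt 2" using C q by (simp add: real_sqrt_mult)
  finally have sqrt_CT: "sqrt (C * T) = C * q * sqrt 2" .
  have "K * q * C + T * K\<^sup>2 / (K * q) = 3 * C * K * q"
    using q K by (simp add: T_eq power2_eq_square field_simps)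
  also have "\<dots> \<le> 4 * C * K * q" using C K q by simp
  also have "\<dots> = 2 * sqrt 2 * K * sqrt (C * T)" unfolding sqrt_CT by (simp add: algebra_simps)
  finally show ?thesis unfolding q_def .
qed

lemma capped_simplex_nonempty: "C \<le> N \<Longrightarrow> capped_simplex N C \<noteq> {}"
proof -
  assume "C \<le> N"
  then have "{..<N} \<inter> {i. i < C} = {..<C}" by auto
  then have "(\<lambda>i. if i < C then 1 else 0 :: real) \<in> capped_simplex N C"
    by (simp add: capped_simplex_def sum.If_cases)
  then show ?thesis by blast
qed

locale nfpl_run =
  fixes N C T B :: nat and r :: "nat \<Rightarrow> nat \<Rightarrow> nat" and f \<eta> :: real
    and M :: "(nat \<Rightarrow> real) \<Rightarrow> nat \<Rightarrow> real"
  assumes f_pos: "0 < f" and f_le_1: "f \<le> 1" and eta_pos: "0 < \<eta>"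
    and batch_size: "\<And>t. t < T \<Longrightarrow> (\<Sum>i<N. r t i) = B"
    and min_oracle: "is_min_oracle N C M"
    and M_measurable: "M \<in> PiM UNIV (\<lambda>_. borel) \<rightarrow>\<^sub>M PiM UNIV (\<lambda>_. borel)"
begin

abbreviation "S \<equiv> sample_space T N r f"
abbreviation "P \<equiv> pert_space T N \<eta>"

sublocale S: prob_space S by (rule prob_space_sample_space)
sublocale P: prob_space P
  unfolding pert_space_def using eta_pos by (intro prob_space_PiM prob_space_uniform_Icc)
sublocale SP: pair_sigma_finite S P ..
sublocale SxP: prob_space "S \<Otimes>\<^sub>M P" by (rule prob_space_pair) unfold_locales

definition est_cost :: "(nat \<times> nat \<times> nat \<Rightarrow> bool) \<Rightarrow> (nat \<times> nat \<Rightarrow> real) \<Rightarrow> real" where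
  "est_cost \<sigma> \<gamma> = (\<Sum>t<T. \<Sum>i<N. rhat r f \<sigma> t i * nfpl_decision M r f \<sigma> \<gamma> t i)"

lemma borel_measurable_nfpl_decision:
  "(\<lambda>\<omega>. nfpl_decision M r f (fst \<omega>) (snd \<omega>) t i) \<in> borel_measurable (S \<Otimes>\<^sub>M P)"
  "(\<lambda>\<sigma>. nfpl_decision M r f \<sigma> \<gamma> t i) \<in> borel_measurable S"
  "(\<lambda>\<gamma>. nfpl_decision M r f \<sigma> \<gamma> t i) \<in> borel_measurable P"
proof -
  have pert: "(\<lambda>\<gamma>. \<gamma> k) \<in> borel_measurable P" for k
    using borel_measurable_PiM_eval[where \<phi>="\<lambda>y. y" and Mi="\<lambda>_. uniform_measure lborel {0..\<eta>}"]
    by (simp add: pert_space_def)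
  show "(\<lambda>\<omega>. nfpl_decision M r f (fst \<omega>) (snd \<omega>) t i) \<in> borel_measurable (S \<Otimes>\<^sub>M P)"
    "(\<lambda>\<sigma>. nfpl_decision M r f \<sigma> \<gamma> t i) \<in> borel_measurable S"
    "(\<lambda>\<gamma>. nfpl_decision M r f \<sigma> \<gamma> t i) \<in> borel_measurable P"
    unfolding nfpl_decision_def
    by (intro borel_measurable_min_oracle[OF M_measurable] borel_measurable_add borel_measurable_sum
        borel_measurable_const borel_measurable_rhat pert measurable_compose[OF measurable_fst]
        measurable_compose[OF measurable_snd])+
qed

lemma nfpl_decision_bounds: "i < N \<Longrightarrow> \<bar>nfpl_decision M r f \<sigma> \<gamma> t i\<bar> \<le> 1"
  using min_oracleD(1,2)[OF min_oracle] by (simp add: nfpl_decision_def)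

lemma integrable_nfpl_cost: "integrable (S \<Otimes>\<^sub>M P) (nfpl_cost T N M r f)"
proof (rule SxP.integrable_const_bound[where B="\<Sum>t<T. \<Sum>i<N. real (r t i)"])
  show "nfpl_cost T N M r f \<in> borel_measurable (S \<Otimes>\<^sub>M P)"
    unfolding nfpl_cost_def
    by (intro borel_measurable_sum borel_measurable_times borel_measurable_const
        borel_measurable_nfpl_decision)
  have "0 \<le> (\<Sum>i<N. real (r t i) * nfpl_decision M r f \<sigma> \<gamma> t i)
      \<and> (\<Sum>i<N. real (r t i) * nfpl_decision M r f \<sigma> \<gamma> t i) \<le> (\<Sum>i<N. real (r t i))" for \<sigma> \<gamma> t
    unfolding nfpl_decision_def by (rule min_oracle_cost_bounds[OF min_oracle]) simp
  then have "0 \<le> nfpl_cost T N M r f \<omega>" "nfpl_cost T N M r f \<omega> \<le> (\<Sum>t<T. \<Sum>i<N. real (r t i))" for \<omega>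
    unfolding nfpl_cost_def by (simp_all add: sum_nonneg sum_mono)
  then show "AE \<omega> in S \<Otimes>\<^sub>M P. norm (nfpl_cost T N M r f \<omega>) \<le> (\<Sum>t<T. \<Sum>i<N. real (r t i))"
    by (intro AE_I2) (simp add: abs_of_nonneg)
qed

lemma integrable_est_cost: "integrable (S \<Otimes>\<^sub>M P) (\<lambda>(\<sigma>, \<gamma>). est_cost \<sigma> \<gamma>)"
proof (rule SxP.integrable_const_bound[where B="real T * (real B / f)"])
  show "(\<lambda>(\<sigma>, \<gamma>). est_cost \<sigma> \<gamma>) \<in> borel_measurable (S \<Otimes>\<^sub>M P)"
    unfolding est_cost_def case_prod_beta
    by (intro borel_measurable_sum borel_measurable_times borel_measurable_nfpl_decision
        measurable_compose[OF measurable_fst borel_measurable_rhat])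
  have slot_bounds: "0 \<le> (\<Sum>i<N. rhat r f \<sigma> t i * nfpl_decision M r f \<sigma> \<gamma> t i)
      \<and> (\<Sum>i<N. rhat r f \<sigma> t i * nfpl_decision M r f \<sigma> \<gamma> t i) \<le> (\<Sum>i<N. rhat r f \<sigma> t i)" for \<sigma> \<gamma> t
    unfolding nfpl_decision_def by (rule min_oracle_cost_bounds[OF min_oracle]) (simp add: rhat_nonneg f_pos)
  have "(\<Sum>i<N. rhat r f \<sigma> t i * nfpl_decision M r f \<sigma> \<gamma> t i) \<le> real B / f" if "t < T" for \<sigma> \<gamma> t
  proof -
    have "(\<Sum>i<N. rhat r f \<sigma> t i) \<le> real B / f"
      using f_pos batch_size[OF that] by (rule sum_rhat_le)
    then show ?thesis using slot_bounds by (meson order_trans)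
  qed
  then have "est_cost \<sigma> \<gamma> \<le> (\<Sum>t<T. real B / f)" for \<sigma> \<gamma>
    unfolding est_cost_def by (intro sum_mono) simp
  moreover have "0 \<le> est_cost \<sigma> \<gamma>" for \<sigma> \<gamma>
    unfolding est_cost_def using slot_bounds by (simp add: sum_nonneg)
  ultimately have "\<bar>est_cost \<sigma> \<gamma>\<bar> \<le> real T * (real B / f)" for \<sigma> \<gamma>
    by (simp add: abs_of_nonneg)
  then show "AE \<omega> in S \<Otimes>\<^sub>M P. norm ((\<lambda>(\<sigma>, \<gamma>). est_cost \<sigma> \<gamma>) \<omega>) \<le> real T * (real B / f)"
    by (intro AE_I2) (simp add: split_beta)
qed

lemma integral_nfpl_cost_eq_est_cost:
  "(\<integral>\<sigma>. nfpl_cost T N M r f (\<sigma>, \<gamma>) \<partial>S) = (\<integral>\<sigma>. est_cost \<sigma> \<gamma> \<partial>S)"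
proof -
  have decision_integrable: "integrable S (\<lambda>\<sigma>. nfpl_decision M r f \<sigma> \<gamma> t i)" if "i < N" for t i
    by (rule S.integrable_const_bound[where B=1])
       (simp_all add: nfpl_decision_bounds[OF that] borel_measurable_nfpl_decision)
  have est_integrable: "integrable S (\<lambda>\<sigma>. rhat r f \<sigma> t i * nfpl_decision M r f \<sigma> \<gamma> t i)"
    if "i < N" for t i
  proof (rule S.integrable_const_bound[where B="real (r t i) / f"])
    have "\<bar>rhat r f \<sigma> t i\<bar> * \<bar>nfpl_decision M r f \<sigma> \<gamma> t i\<bar> \<le> real (r t i) / f * 1" for \<sigma>
      by (intro mult_mono) (simp_all add: rhat_le rhat_nonneg f_pos less_imp_le nfpl_decision_bounds that)
    then show "AE \<sigma> in S. norm (rhat r f \<sigma> t i * nfpl_decision M r f \<sigma> \<gamma> t i) \<le> real (r t i) / f"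
      by (intro AE_I2) (simp add: abs_mult)
  qed (intro borel_measurable_times borel_measurable_rhat borel_measurable_nfpl_decision)
  have unbiased: "real (r t i) * (\<integral>\<sigma>. nfpl_decision M r f \<sigma> \<gamma> t i \<partial>S)
      = (\<integral>\<sigma>. rhat r f \<sigma> t i * nfpl_decision M r f \<sigma> \<gamma> t i \<partial>S)" if "t < T" "i < N" for t i
    using nfpl_decision_bounds[OF that(2)]
    by (subst integral_rhat_times_indep[OF f_pos f_le_1 that borel_measurable_nfpl_decision(2)])
       (auto simp: nfpl_decision_def rhat_fun_upd_later)
  have "(\<integral>\<sigma>. nfpl_cost T N M r f (\<sigma>, \<gamma>) \<partial>S)
      = (\<Sum>t<T. \<Sum>i<N. real (r t i) * (\<integral>\<sigma>. nfpl_decision M r f \<sigma> \<gamma> t i \<partial>S))"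
  proof -
    have "integrable S (\<lambda>\<sigma>. real (r t i) * nfpl_decision M r f \<sigma> \<gamma> t i)" if "i < N" for t i
      using decision_integrable[OF that] by simp
    moreover from this have "integrable S (\<lambda>\<sigma>. \<Sum>i<N. real (r t i) * nfpl_decision M r f \<sigma> \<gamma> t i)" for t
      by (intro Bochner_Integration.integrable_sum) simp
    ultimately show ?thesis
      unfolding nfpl_cost_def by (simp add: Bochner_Integration.integral_sum)
  qed
  also have "\<dots> = (\<Sum>t<T. \<Sum>i<N. \<integral>\<sigma>. rhat r f \<sigma> t i * nfpl_decision M r f \<sigma> \<gamma> t i \<partial>S)"
    by (simp add: unbiased)
  also have "\<dots> = (\<integral>\<sigma>. est_cost \<sigma> \<gamma> \<partial>S)"
  proof -
    have "integrable S (\<lambda>\<sigma>. \<Sum>i<N. rhat r f \<sigma> t i * nfpl_decision M r f \<sigma> \<gamma> t i)" for t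
      using est_integrable by (intro Bochner_Integration.integrable_sum) simp
    then show ?thesis
      unfolding est_cost_def using est_integrable by (simp add: Bochner_Integration.integral_sum)
  qed
  finally show ?thesis .
qed

lemma integral_est_cost_pert_le:
  assumes x: "x \<in> capped_simplex N C"
  shows "(\<integral>\<gamma>. est_cost \<sigma> \<gamma> \<partial>P)
    \<le> (\<Sum>i<N. (\<Sum>t<T. rhat r f \<sigma> t i) * x i) + \<eta> * real C + real T * (real B / f)\<^sup>2 / \<eta>"
proof -
  define g where "g t u = (\<Sum>i<N. rhat r f \<sigma> t i * M (\<lambda>i. (\<Sum>s<t. rhat r f \<sigma> s i) + u i) i)" for t u
  have oracle_cost_meas: "(\<lambda>s. \<Sum>i<N. rhat r f \<sigma> t i * M s i) \<in> borel_measurable (PiM UNIV (\<lambda>_. borel))" for t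
    by (intro borel_measurable_sum borel_measurable_times borel_measurable_const
        borel_measurable_min_oracle[OF M_measurable]) simp
  have slot: "(\<integral>\<gamma>. (\<Sum>i<N. rhat r f \<sigma> t i * nfpl_decision M r f \<sigma> \<gamma> t i) \<partial>P)
      = (\<integral>u. g t u \<partial>uniform_cube N \<eta>)" if "t < T" for t
    using integral_pert_space_slot[OF eta_pos that borel_measurable_uniform_cube_translate[OF oracle_cost_meas]]
    by (simp add: g_def nfpl_decision_def)
  have slot_integrable: "integrable P (\<lambda>\<gamma>. \<Sum>i<N. rhat r f \<sigma> t i * nfpl_decision M r f \<sigma> \<gamma> t i)" for t
  proof (rule P.integrable_const_bound[where B="\<Sum>i<N. rhat r f \<sigma> t i"])
    show "AE \<gamma> in P. norm (\<Sum>i<N. rhat r f \<sigma> t i * nfpl_decision M r f \<sigma> \<gamma> t i) \<le> (\<Sum>i<N. rhat r f \<sigma> t i)"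
      using min_oracle_cost_bounds[OF min_oracle, of "rhat r f \<sigma> t"] rhat_nonneg[OF f_pos]
      by (intro AE_I2) (simp add: nfpl_decision_def)
  qed (intro borel_measurable_sum borel_measurable_times borel_measurable_const borel_measurable_nfpl_decision)
  have "(\<integral>\<gamma>. est_cost \<sigma> \<gamma> \<partial>P) = (\<Sum>t<T. \<integral>u. g t u \<partial>uniform_cube N \<eta>)"
    unfolding est_cost_def using slot_integrable by (simp add: slot)
  also have "\<dots> \<le> (\<Sum>i<N. (\<Sum>t<T. rhat r f \<sigma> t i) * x i) + \<eta> * real C + real T * (real B / f)\<^sup>2 / \<eta>"
    unfolding g_def
    by (rule fpl_expected_cost_le[OF eta_pos min_oracle x M_measurable])
       (simp_all add: rhat_nonneg f_pos sum_rhat_le batch_size)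
  finally show ?thesis .
qed

lemma integral_rhat: "t < T \<Longrightarrow> i < N \<Longrightarrow> (\<integral>\<sigma>. rhat r f \<sigma> t i \<partial>S) = real (r t i)"
  using integral_rhat_times_indep[OF f_pos f_le_1, of t T i N "\<lambda>_. 1" r 1] by (simp add: S.prob_space)

lemma expected_nfpl_cost_le:
  assumes x: "x \<in> capped_simplex N C"
  shows "(\<integral>\<omega>. nfpl_cost T N M r f \<omega> \<partial>nfpl_space T N r f \<eta>)
    \<le> (\<Sum>t<T. \<Sum>i<N. real (r t i) * x i) + \<eta> * real C + real T * (real B / f)\<^sup>2 / \<eta>"
proof -
  define c where "c = \<eta> * real C + real T * (real B / f)\<^sup>2 / \<eta>"
  have rhat_integrable: "integrable S (\<lambda>\<sigma>. rhat r f \<sigma> t i)" for t i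
    by (rule S.integrable_const_bound[where B="real (r t i) / f"])
       (simp_all add: borel_measurable_rhat rhat_le rhat_nonneg f_pos)
  have "(\<integral>\<omega>. nfpl_cost T N M r f \<omega> \<partial>nfpl_space T N r f \<eta>)
      = (\<integral>\<gamma>. \<integral>\<sigma>. nfpl_cost T N M r f (\<sigma>, \<gamma>) \<partial>S \<partial>P)"
    using SP.integral_snd[of "\<lambda>\<sigma> \<gamma>. nfpl_cost T N M r f (\<sigma>, \<gamma>)"] integrable_nfpl_cost
    by (simp add: nfpl_space_def)
  also have "\<dots> = (\<integral>\<gamma>. \<integral>\<sigma>. est_cost \<sigma> \<gamma> \<partial>S \<partial>P)"
    by (simp add: integral_nfpl_cost_eq_est_cost)
  also have "\<dots> = (\<integral>\<sigma>. \<integral>\<gamma>. est_cost \<sigma> \<gamma> \<partial>P \<partial>S)"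
    by (rule SP.Fubini_integral[OF integrable_est_cost])
  also have "\<dots> \<le> (\<integral>\<sigma>. (\<Sum>i<N. (\<Sum>t<T. rhat r f \<sigma> t i) * x i) + c \<partial>S)"
    by (rule integral_mono[OF SP.integrable_fst[OF integrable_est_cost]])
       (use rhat_integrable integral_est_cost_pert_le[OF x] in \<open>auto simp: c_def add.assoc\<close>)
  also have "\<dots> = (\<Sum>i<N. (\<Sum>t<T. real (r t i)) * x i) + c"
    using rhat_integrable by (simp add: integral_rhat S.prob_space)
  also have "\<dots> = (\<Sum>t<T. \<Sum>i<N. real (r t i) * x i) + c"
    by (simp add: sum_distrib_right sum.swap[of _ "{..<N}"])
  finally show ?thesis unfolding c_def by simp
qed

lemma nfpl_pseudo_regret_le:
  assumes "C \<le> N"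
  shows "nfpl_pseudo_regret N C T r f \<eta> M \<le> \<eta> * real C + real T * (real B / f)\<^sup>2 / \<eta>"
proof -
  have "(\<integral>\<omega>. nfpl_cost T N M r f \<omega> \<partial>nfpl_space T N r f \<eta>) - (\<eta> * real C + real T * (real B / f)\<^sup>2 / \<eta>)
      \<le> (INF x\<in>capped_simplex N C. \<Sum>t<T. \<Sum>i<N. real (r t i) * x i)"
    using capped_simplex_nonempty[OF assms] expected_nfpl_cost_le
    by (intro cINF_greatest) force+
  then show ?thesis unfolding nfpl_pseudo_regret_def by linarith
qed

end

theorem corollary3:
  fixes N C B T :: nat and r :: "nat \<Rightarrow> nat \<Rightarrow> nat" and f :: real
    and M :: "(nat \<Rightarrow> real) \<Rightarrow> (nat \<Rightarrow> real)"
  assumes "0 < C" and "2 * C < N" and "0 < B" and "0 < T"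
    and "0 < f" and "f \<le> 1"
    and "\<forall>t<T. (\<Sum>i<N. r t i) = B"
    and "is_min_oracle N C M"
    and "M \<in> PiM UNIV (\<lambda>_. borel) \<rightarrow>\<^sub>M PiM UNIV (\<lambda>_. borel)"
  shows "nfpl_pseudo_regret N C T r f (real B / f * sqrt (real T / (2 * real C))) M
           \<le> 2 * sqrt 2 * (real B / f) * sqrt (real C * real T)"
proof -
  let ?\<eta> = "real B / f * sqrt (real T / (2 * real C))"
  \<comment> \<open>of \<open>2 C < N\<close> only \<open>C \<le> N\<close> is needed, for a comparator to exist\<close>
  interpret nfpl_run N C T B r f ?\<eta> M
    by unfold_locales (use assms in simp_all)
  have "nfpl_pseudo_regret N C T r f ?\<eta> M \<le> ?\<eta> * real C + real T * (real B / f)\<^sup>2 / ?\<eta>"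
    by (rule nfpl_pseudo_regret_le) (use assms(2) in simp)
  also have "\<dots> \<le> 2 * sqrt 2 * (real B / f) * sqrt (real C * real T)"
    by (rule perturbation_tradeoff_le) (use assms in simp_all)
  finally show ?thesis .
qed

end
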